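(* Consider the model and approximate SIR $\widetilde{\mathsf{SIR}}''_L$ in the context with $\alpha=4$, $p=1$ and $L\ge2$. If $\beta<\frac{\gamma}{L-1}$, then $$\mathbb{P}\left(\widetilde{\mathsf{SIR}}''_L\ge\frac{\beta}{\gamma}\right)=\left(1-\frac{1}{\sqrt{\gamma/\beta+\frac{(L-2)^2}{4}}-\frac{L-2}{2}}\right)^{L-1},$$ and if $\beta\ge\frac{\gamma}{L-1}$ this probability is $0$.
   Context: Let $\Phi$ be a homogeneous Poisson point process on $\mathbb{R}^2$ of intensity $\lambda>0$ (base stations), user at the origin $o$; label points in increasing distance as $x_1,x_2,\dots$, $R_k=\|x_k\|$. Fix an integer $L\ge2$, $\alpha>2$, $\gamma>0$, $\beta>0$, $p\in[0,1]$. Independently of $\Phi$ let $a_1,\dots,a_{L-1}$ be i.i.d. Bernoulli($p$), $\Omega=\sum_{i=1}^{L-1}a_i$; when $\Omega\ge1$, $\hat R_1$ is the smallest distance from $o$ among the $x_i$ with $i\le L-1$, $a_i=1$. Approximate SIR limited by participating-BS interference only (fully loaded network, interference from BSs beyond $x_L$ and noise ignored): if $\Omega\ge1$, $$\widetilde{\mathsf{SIR}}''_L=\frac{R_L^{-\alpha}}{\hat R_1^{-\alpha}+\frac{2(\Omega-1)}{2-\alpha}\cdot\frac{R_L^{2-\alpha}-\hat R_1^{2-\alpha}}{R_L^2-\hat R_1^2}},$$ and if $\Omega=0$, $\widetilde{\mathsf{SIR}}''_L=+\infty$. *)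

theory Defs
  imports "HOL-Probability.Probability"
begin

definition hppp :: "'a measure \<Rightarrow> real \<Rightarrow> ('a \<Rightarrow> (real^2) set) \<Rightarrow> bool" where
  "hppp M lam Phi \<longleftrightarrow>
     prob_space M \<and>
     (\<forall>\<omega>\<in>space M. \<forall>B. bounded B \<longrightarrow> finite (Phi \<omega> \<inter> B)) \<and>
     (\<forall>B\<in>sets lborel. bounded B \<longrightarrow>
        (\<lambda>\<omega>. card (Phi \<omega> \<inter> B)) \<in> measurable M (count_space UNIV) \<and>
        (\<forall>k::nat. measure M {\<omega>\<in>space M. card (Phi \<omega> \<inter> B) = k}
            = exp (- lam * measure lborel B) * (lam * measure lborel B) ^ k / fact k)) \<and>
     (\<forall>(I::nat set) Bs. finite I \<longrightarrow> (\<forall>i\<in>I. Bs i \<in> sets lborel \<and> bounded (Bs i)) \<longrightarrow>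
        disjoint_family_on Bs I \<longrightarrow>
        prob_space.indep_vars M (\<lambda>_. count_space UNIV) (\<lambda>i \<omega>. card (Phi \<omega> \<inter> Bs i)) I)"

definition Rk :: "(real^2) set \<Rightarrow> nat \<Rightarrow> real" where
  "Rk P k = Inf {r. 0 \<le> r \<and> k \<le> card {x\<in>P. norm x \<le> r}}"

text \<open>Approximate SIR'' for path-loss exponent alpha, cooperation size L, point set P and
participation indicators a (indices 1..L-1); +\<infinity> if no BS participates.\<close>
definition approx_SIR :: "real \<Rightarrow> nat \<Rightarrow> (real^2) set \<Rightarrow> (nat \<Rightarrow> bool) \<Rightarrow> ereal" where
  "approx_SIR alpha L P a =
     (let Om = card {i\<in>{1..L-1}. a i} in
      if Om = 0 then \<infinity> else
      (let R1h = Min (Rk P ` {i\<in>{1..L-1}. a i}); RL = Rk P L in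
        ereal (RL powr (- alpha) /
          (R1h powr (- alpha) + 2 * (real Om - 1) / (2 - alpha)
             * (RL powr (2 - alpha) - R1h powr (2 - alpha)) / (RL\<^sup>2 - R1h\<^sup>2)))))"

end

(*
  With p = 1 every base station participates, so for alpha = 4 the approximate SIR depends only on
  t = (R_1/R_L)^2, namely SIR = t^2 / (1 + (L - 2) t), and SIR >= beta/gamma exactly when t is at
  least the positive root s of the quadratic t^2 = (beta/gamma) (1 + (L - 2) t).

  Measuring distances by the mean point count U = lam pi R^2 of the disc turns them into the
  arrival times of a unit-rate Poisson process on the line. If the L-th arrival U_L is near u, the
  event s U_L <= U_1 asks for no arrival before s u, so P(s U_L <= U_1, U_L <= u) has derivative
  e^(-s u) f_L(u - s u) = (1 - s)^(L-1) f_L(u), with f_L the Erlang density. Integrating,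
  P(t >= s) = (1 - s)^(L-1) for s < 1 (t is Beta(1, L-1) distributed) and 0 for s >= 1, and
  s < 1 is equivalent to beta < gamma / (L - 1).
*)

theory Submission
  imports Defs
begin

section \<open>Poisson tails and Erlang densities\<close>

definition poisson_lt :: "nat \<Rightarrow> real \<Rightarrow> real" where
  "poisson_lt n x = (\<Sum>k<n. exp (- x) * x ^ k / fact k)"

definition erlang_density :: "nat \<Rightarrow> real \<Rightarrow> real" where
  "erlang_density n x = exp (- x) * x ^ (n - 1) / fact (n - 1)"

lemma has_real_derivative_poisson_lt:
  assumes "n \<ge> 1"
  shows "(poisson_lt n has_real_derivative - erlang_density n x) (at x)"
  using assms
proof (induction n rule: dec_induct)
  case base
  have "poisson_lt 1 = (\<lambda>x. exp (- x))" by (auto simp: poisson_lt_def)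
  then show ?case unfolding erlang_density_def by (auto intro!: derivative_eq_intros)
next
  case (step n)
  have eq: "poisson_lt (Suc n) = (\<lambda>x. poisson_lt n x + exp (- x) * x ^ n / fact n)"
    by (auto simp: poisson_lt_def)
  have "((\<lambda>x. poisson_lt n x + exp (- x) * x ^ n / fact n) has_real_derivative
      - erlang_density n x + (- exp (- x) * x ^ n + exp (- x) * (real n * x ^ (n - 1))) / fact n) (at x)"
    by (rule derivative_eq_intros step.IH)+ (auto intro!: derivative_eq_intros)
  moreover have "fact n = real n * fact (n - 1)"
    using step(1) by (metis fact_num_eq_if of_nat_fact not_one_le_zero)
  then have "- erlang_density n x + (- exp (- x) * x ^ n + exp (- x) * (real n * x ^ (n - 1))) / fact n
      = - erlang_density (Suc n) x"
    using step(1) unfolding erlang_density_def by (simp add: field_simps)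
  ultimately show ?case unfolding eq by simp
qed

lemma poisson_lt_0: "n \<ge> 1 \<Longrightarrow> poisson_lt n 0 = 1"
  unfolding poisson_lt_def by (induction n rule: dec_induct) auto

lemma poisson_lt_tendsto_0: "(poisson_lt n \<longlongrightarrow> 0) at_top"
proof -
  have "poisson_lt n = (\<lambda>x. \<Sum>k<n. x ^ k / exp x / fact k)"
    by (auto simp: poisson_lt_def exp_minus field_simps intro!: ext sum.cong)
  moreover have "((\<lambda>x::real. \<Sum>k<n. x ^ k / exp x / fact k) \<longlongrightarrow> (\<Sum>k<n. 0)) at_top"
    by (intro tendsto_sum tendsto_divide_zero tendsto_power_div_exp_0)
  ultimately show ?thesis by simp
qed

lemma erlang_density_0: "n \<ge> 2 \<Longrightarrow> erlang_density n 0 = 0"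
  by (simp add: erlang_density_def)

lemma isCont_erlang_density: "isCont (erlang_density n) x"
  unfolding erlang_density_def by (intro continuous_intros) simp

lemma erlang_density_shift:
  "exp (- (s * u)) * erlang_density n (u - s * u) = (1 - s) ^ (n - 1) * erlang_density n u"
proof -
  have "exp (- (s * u)) * exp (- (u - s * u)) = exp (- u)" by (simp add: exp_add [symmetric])
  moreover have "(u - s * u) ^ (n - 1) = (1 - s) ^ (n - 1) * u ^ (n - 1)"
    by (simp add: power_mult_distrib [symmetric] algebra_simps)
  ultimately show ?thesis unfolding erlang_density_def by (simp add: field_simps)
qed

lemma difference_quotient_tendsto:
  fixes a b :: "'b \<Rightarrow> real"
  assumes deriv: "\<And>x. (Q has_real_derivative - q x) (at x)" and cont: "isCont q z"
    and a: "(a \<longlongrightarrow> z) F" and b: "(b \<longlongrightarrow> z) F" and ab: "eventually (\<lambda>y. a y < b y) F"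
  shows "((\<lambda>y. (Q (a y) - Q (b y)) / (b y - a y)) \<longlongrightarrow> q z) F"
proof (rule tendstoI)
  fix e :: real assume "e > 0"
  with cont obtain d where d: "d > 0" "\<And>x. dist x z < d \<Longrightarrow> dist (q x) (q z) < e"
    unfolding continuous_at_eps_delta by blast
  have "eventually (\<lambda>y. dist (a y) z < d) F" using a d(1) by (rule tendstoD)
  moreover have "eventually (\<lambda>y. dist (b y) z < d) F" using b d(1) by (rule tendstoD)
  ultimately show "eventually (\<lambda>y. dist ((Q (a y) - Q (b y)) / (b y - a y)) (q z) < e) F"
    using ab
  proof eventually_elim
    case (elim y)
    obtain \<xi> where \<xi>: "a y < \<xi>" "\<xi> < b y" "Q (b y) - Q (a y) = (b y - a y) * - q \<xi>"
      using MVT2[of "a y" "b y" Q "\<lambda>x. - q x"] elim(3) deriv by blast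
    then have "(Q (a y) - Q (b y)) / (b y - a y) = q \<xi>" by (simp add: field_simps)
    moreover have "dist \<xi> z < d" using elim \<xi> by (auto simp: dist_real_def)
    ultimately show ?case using d(2) by simp
  qed
qed

lemma exp_poisson_lt_quotient_tendsto:
  assumes "n \<ge> 1" and "(c \<longlongrightarrow> c0) F" "(a \<longlongrightarrow> z) F" "(b \<longlongrightarrow> z) F" "\<forall>\<^sub>F y in F. a y < b y"
  shows "((\<lambda>y. exp (- c y) * ((poisson_lt n (a y) - poisson_lt n (b y)) / (b y - a y)))
    \<longlongrightarrow> exp (- c0) * erlang_density n z) F"
  using assms
  by (intro tendsto_intros difference_quotient_tendsto[OF has_real_derivative_poisson_lt isCont_erlang_density])

lemma has_field_derivative_within_increments:
  fixes H :: "real \<Rightarrow> real"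
  assumes u: "u \<in> S"
    and lim: "((\<lambda>(v, w). (H w - H v) / (w - v)) \<longlongrightarrow> D)
      (at (u, u) within {(v, w). v \<in> S \<and> w \<in> S \<and> v < w})"
  shows "(H has_field_derivative D) (at u within S)"
proof -
  let ?F = "at (u, u) within {(v, w). v \<in> S \<and> w \<in> S \<and> v < w}"
  have "filterlim (\<lambda>y. (u, y)) ?F (at u within S \<inter> {u<..})"
    by (intro filterlim_at_withinI tendsto_intros) (auto simp: eventually_at_filter u)
  from filterlim_compose[OF lim this]
  have right: "((\<lambda>y. (H y - H u) / (y - u)) \<longlongrightarrow> D) (at u within S \<inter> {u<..})"
    by simp
  have "filterlim (\<lambda>y. (y, u)) ?F (at u within S \<inter> {..<u})"
    by (intro filterlim_at_withinI tendsto_intros) (auto simp: eventually_at_filter u)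
  from filterlim_compose[OF lim this]
  have "((\<lambda>y. (H u - H y) / (u - y)) \<longlongrightarrow> D) (at u within S \<inter> {..<u})"
    by simp
  moreover have "(H u - H y) / (u - y) = (H y - H u) / (y - u)" for y
    by (metis minus_diff_eq minus_divide_divide)
  ultimately have left: "((\<lambda>y. (H y - H u) / (y - u)) \<longlongrightarrow> D) (at u within S \<inter> {..<u})"
    by simp
  have "S - {u} = (S \<inter> {u<..} \<union> S \<inter> {..<u}) - {u}" by auto
  then have "at u within S = at u within (S \<inter> {u<..} \<union> S \<inter> {..<u})"
    unfolding at_within_def by simp
  with Lim_Un[OF right left] show ?thesis
    by (simp add: has_field_derivative_iff)
qed

section \<open>Distances to the nearest points of a locally finite set\<close>

definition locally_finite_points :: "(real^2) set \<Rightarrow> bool" where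
  "locally_finite_points P \<longleftrightarrow> (\<forall>B. bounded B \<longrightarrow> finite (P \<inter> B))"

definition ball_count :: "(real^2) set \<Rightarrow> real \<Rightarrow> nat" where
  "ball_count P r = card (P \<inter> cball 0 r)"

definition at_least_points :: "nat \<Rightarrow> (real^2) set \<Rightarrow> bool" where
  "at_least_points k P \<longleftrightarrow> (\<exists>r\<ge>0. k \<le> ball_count P r)"

lemma ball_count_mono:
  "locally_finite_points P \<Longrightarrow> r \<le> r' \<Longrightarrow> ball_count P r \<le> ball_count P r'"
  unfolding ball_count_def locally_finite_points_def by (intro card_mono) auto

lemma at_least_points_mono: "at_least_points k' P \<Longrightarrow> k \<le> k' \<Longrightarrow> at_least_points k P"
  unfolding at_least_points_def by (meson le_trans)

lemma locally_finite_points_finite_cball: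
  "locally_finite_points P \<Longrightarrow> finite (P \<inter> cball 0 r)"
  unfolding locally_finite_points_def by (metis bounded_cball)

lemma locally_finite_points_cball_right_gap:
  assumes "locally_finite_points P"
  obtains d where "d > 0" "P \<inter> cball 0 (R + d) = P \<inter> cball 0 R"
proof -
  have "finite (norm ` (P \<inter> cball 0 (R + 1)))"
    using assms by (intro finite_imageI locally_finite_points_finite_cball)
  from finite_set_avoid[OF this, of R] obtain e
    where e: "e > 0" "\<forall>t \<in> norm ` (P \<inter> cball 0 (R + 1)). t \<noteq> R \<longrightarrow> e \<le> dist R t"
    by blast
  define d where "d = min 1 (e / 2)"
  have "norm x \<le> R" if "x \<in> P" "norm x \<le> R + d" for x
    using e that by (force simp: d_def dist_real_def)
  then have "P \<inter> cball 0 (R + d) = P \<inter> cball 0 R"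
    using e(1) by (auto simp: d_def)
  moreover have "d > 0" using e(1) by (simp add: d_def)
  ultimately show ?thesis using that by blast
qed

lemma Rk_le_iff:
  assumes lf: "locally_finite_points P" and k: "at_least_points k P" and r: "r \<ge> 0"
  shows "Rk P k \<le> r \<longleftrightarrow> k \<le> ball_count P r"
proof -
  define S where "S = {r. 0 \<le> r \<and> k \<le> ball_count P r}"
  have Rk: "Rk P k = Inf S"
    unfolding Rk_def S_def ball_count_def by (simp add: Int_def mem_cball_0 conj_commute)
  have ne: "S \<noteq> {}" and bdd: "bdd_below S"
    using k by (auto simp: S_def at_least_points_def intro: bdd_belowI[of _ 0])
  have up: "b \<in> S" if "a \<in> S" "a \<le> b" for a b
    using that ball_count_mono[OF lf] unfolding S_def by (auto intro: le_trans)
  have "Inf S \<in> S"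
  proof -
    obtain d where d: "d > 0" "P \<inter> cball 0 (Inf S + d) = P \<inter> cball 0 (Inf S)"
      using locally_finite_points_cball_right_gap[OF lf] by blast
    have "Inf S < Inf S + d" using d(1) by simp
    then obtain y where "y \<in> S" "y < Inf S + d"
      unfolding cInf_less_iff[OF ne bdd] by blast
    then have "Inf S + d \<in> S" using up[of y "Inf S + d"] by (simp add: less_imp_le)
    moreover have "Inf S \<ge> 0" using ne by (intro cInf_greatest) (auto simp: S_def)
    ultimately show ?thesis using d(2) by (simp add: S_def ball_count_def)
  qed
  then show ?thesis
    using up[of "Inf S" r] cInf_lower[OF _ bdd, of r] r by (auto simp: Rk S_def)
qed

lemma Rk_nonneg: "at_least_points k P \<Longrightarrow> Rk P k \<ge> 0"
  unfolding Rk_def ball_count_def at_least_points_def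
  by (intro cInf_greatest) (auto simp: Int_def mem_cball_0 conj_commute)

lemma Rk_mono:
  assumes lf: "locally_finite_points P" and k': "at_least_points k' P" and "k \<le> k'"
  shows "Rk P k \<le> Rk P k'"
proof -
  have "k' \<le> ball_count P (Rk P k')"
    using Rk_le_iff[OF lf k' Rk_nonneg[OF k']] by simp
  moreover have "at_least_points k P" using at_least_points_mono k' \<open>k \<le> k'\<close> .
  ultimately show ?thesis
    using Rk_le_iff[OF lf _ Rk_nonneg[OF k']] \<open>k \<le> k'\<close> by simp
qed

lemma Rk_no_points:
  "\<not> at_least_points k P \<Longrightarrow> Rk P k = Inf {}"
  unfolding Rk_def ball_count_def at_least_points_def
  by (rule arg_cong[where f = Inf]) (auto simp: Int_def mem_cball_0 conj_commute)

lemma at_least_points_iff_nat: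
  assumes "locally_finite_points P"
  shows "at_least_points k P \<longleftrightarrow> (\<exists>n::nat. k \<le> ball_count P (real n))"
proof
  assume "at_least_points k P"
  then obtain r where "r \<ge> 0" "k \<le> ball_count P r" by (auto simp: at_least_points_def)
  moreover obtain n :: nat where "r \<le> real n" using real_arch_simple by blast
  ultimately show "\<exists>n::nat. k \<le> ball_count P (real n)"
    using ball_count_mono[OF assms] by (meson le_trans)
next
  assume "\<exists>n::nat. k \<le> ball_count P (real n)"
  then show "at_least_points k P" unfolding at_least_points_def using of_nat_0_le_iff by blast
qed

section \<open>The planar Poisson process\<close>

lemma measure_lborel_cball_2: "r \<ge> 0 \<Longrightarrow> measure lborel (cball (0::real^2) r) = pi * r\<^sup>2"
  by (simp add: content_cball DIM_cart unit_ball_vol_2)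

lemma (in prob_space) AE_not_in_prob_eq_0:
  assumes "A \<in> events" "prob A = 0"
  shows "AE \<omega> in M. \<omega> \<notin> A"
  using assms by (intro AE_not_in null_setsI) (simp_all add: emeasure_eq_measure)

lemma (in prob_space) AE_all_prob_eq_1:
  assumes "finite I" "\<And>i. i \<in> I \<Longrightarrow> prob {\<omega> \<in> space M. P i \<omega>} = 1"
  shows "AE \<omega> in M. \<forall>i\<in>I. P i \<omega>"
proof (rule AE_finite_allI[OF assms(1)])
  fix i assume "i \<in> I"
  then have "AE \<omega> in M. \<omega> \<in> {\<omega> \<in> space M. P i \<omega>}" using assms(2) by (intro AE_prob_1)
  then show "AE \<omega> in M. P i \<omega>" by eventually_elim simp
qed

locale planar_ppp = prob_space M for M :: "'a measure" +
  fixes lam :: real and Phi :: "'a \<Rightarrow> (real^2) set"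
  assumes hppp: "hppp M lam Phi" and lam_pos: "lam > 0"
begin

text \<open>The radius of the disc of mean point count u; in this scale the distances to the
  points become the arrival times of a unit-rate Poisson process.\<close>
definition area_radius :: "real \<Rightarrow> real" where
  "area_radius u = sqrt (u / (lam * pi))"

lemma area_radius_nonneg: "u \<ge> 0 \<Longrightarrow> area_radius u \<ge> 0"
  using lam_pos by (simp add: area_radius_def)

lemma area_radius_mono: "u \<le> v \<Longrightarrow> area_radius u \<le> area_radius v"
  using lam_pos by (simp add: area_radius_def divide_right_mono)

lemma area_radius_sq: "u \<ge> 0 \<Longrightarrow> (area_radius u)\<^sup>2 = u / (lam * pi)"
  using lam_pos by (simp add: area_radius_def)

lemma mean_count_area_radius:
  "u \<ge> 0 \<Longrightarrow> lam * measure lborel (cball (0::real^2) (area_radius u)) = u"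
  using lam_pos by (simp add: measure_lborel_cball_2 area_radius_nonneg area_radius_sq)

lemma locally_finite_Phi: "\<omega> \<in> space M \<Longrightarrow> locally_finite_points (Phi \<omega>)"
  using hppp unfolding hppp_def locally_finite_points_def by blast

lemma count_measurable:
  "B \<in> sets lborel \<Longrightarrow> bounded B \<Longrightarrow> (\<lambda>\<omega>. card (Phi \<omega> \<inter> B)) \<in> measurable M (count_space UNIV)"
  using hppp unfolding hppp_def by blast

lemma prob_count_eq:
  "B \<in> sets lborel \<Longrightarrow> bounded B \<Longrightarrow> prob {\<omega> \<in> space M. card (Phi \<omega> \<inter> B) = k}
     = exp (- lam * measure lborel B) * (lam * measure lborel B) ^ k / fact k"
  using hppp unfolding hppp_def by blast

lemma count_event:
  assumes "B \<in> sets lborel" "bounded B"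
  shows "{\<omega> \<in> space M. Q (card (Phi \<omega> \<inter> B))} \<in> events"
  using measurable_sets[OF count_measurable[OF assms], of "{n. Q n}"]
  by (simp add: vimage_def Int_def conj_commute)

lemma ball_count_event: "{\<omega> \<in> space M. Q (ball_count (Phi \<omega>) r)} \<in> events"
  unfolding ball_count_def by (rule count_event) (simp_all add: borel_closed)

lemma prob_count_less:
  assumes "B \<in> sets lborel" "bounded B"
  shows "prob {\<omega> \<in> space M. card (Phi \<omega> \<inter> B) < n} = poisson_lt n (lam * measure lborel B)"
proof (induction n)
  case (Suc n)
  have "{\<omega> \<in> space M. card (Phi \<omega> \<inter> B) < Suc n}
      = {\<omega> \<in> space M. card (Phi \<omega> \<inter> B) < n} \<union> {\<omega> \<in> space M. card (Phi \<omega> \<inter> B) = n}"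
    by auto
  then have "prob {\<omega> \<in> space M. card (Phi \<omega> \<inter> B) < Suc n}
      = prob {\<omega> \<in> space M. card (Phi \<omega> \<inter> B) < n} + prob {\<omega> \<in> space M. card (Phi \<omega> \<inter> B) = n}"
    by (auto intro!: finite_measure_Union count_event assms)
  then show ?case
    using Suc prob_count_eq[OF assms, of n] by (simp add: poisson_lt_def mult_ac)
qed (simp add: poisson_lt_def)

lemma prob_ball_count_less:
  "u \<ge> 0 \<Longrightarrow> prob {\<omega> \<in> space M. ball_count (Phi \<omega>) (area_radius u) < n} = poisson_lt n u"
  using prob_count_less[of "cball 0 (area_radius u)" n]
  by (simp add: ball_count_def borel_closed mean_count_area_radius)

lemma prob_counts_disjoint:
  assumes B0: "B0 \<in> sets lborel" "bounded B0" and B1: "B1 \<in> sets lborel" "bounded B1"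
    and disj: "B0 \<inter> B1 = {}"
  shows "prob {\<omega> \<in> space M. card (Phi \<omega> \<inter> B0) \<in> X \<and> card (Phi \<omega> \<inter> B1) \<in> Y}
    = prob {\<omega> \<in> space M. card (Phi \<omega> \<inter> B0) \<in> X} * prob {\<omega> \<in> space M. card (Phi \<omega> \<inter> B1) \<in> Y}"
proof -
  define Bs where "Bs = (\<lambda>i::nat. if i = 0 then B0 else B1)"
  define As where "As = (\<lambda>i::nat. if i = 0 then X else Y)"
  have "disjoint_family_on Bs {0, 1}"
    using disj unfolding disjoint_family_on_def Bs_def by auto
  then have "indep_vars (\<lambda>_. count_space UNIV) (\<lambda>i \<omega>. card (Phi \<omega> \<inter> Bs i)) {0, 1}"
    using hppp B0 B1 unfolding hppp_def Bs_def by auto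
  from indep_varsD_finite[OF this, of As]
  have "prob (\<Inter>i\<in>{0, 1}. (\<lambda>\<omega>. card (Phi \<omega> \<inter> Bs i)) -` As i \<inter> space M)
      = (\<Prod>i\<in>{0, 1}. prob ((\<lambda>\<omega>. card (Phi \<omega> \<inter> Bs i)) -` As i \<inter> space M))"
    by simp
  moreover have "(\<Inter>i\<in>{0, 1}. (\<lambda>\<omega>. card (Phi \<omega> \<inter> Bs i)) -` As i \<inter> space M)
      = {\<omega> \<in> space M. card (Phi \<omega> \<inter> B0) \<in> X \<and> card (Phi \<omega> \<inter> B1) \<in> Y}"
    by (auto simp: Bs_def As_def)
  moreover have "(\<lambda>\<omega>. card (Phi \<omega> \<inter> B)) -` Z \<inter> space M = {\<omega> \<in> space M. card (Phi \<omega> \<inter> B) \<in> Z}"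
    for B Z by auto
  ultimately show ?thesis by (simp add: Bs_def As_def)
qed

lemma prob_void_ball_event:
  assumes a: "0 \<le> a" and ax: "a \<le> x"
  shows "prob {\<omega> \<in> space M. ball_count (Phi \<omega>) (area_radius a) = 0
      \<and> ball_count (Phi \<omega>) (area_radius x) < n} = exp (- a) * poisson_lt n (x - a)"
proof -
  define D where "D = cball (0::real^2) (area_radius a)"
  define A where "A = cball (0::real^2) (area_radius x) - D"
  have D: "D \<in> sets lborel" "bounded D" and A: "A \<in> sets lborel" "bounded A"
    unfolding D_def A_def by (auto simp: borel_closed intro: bounded_subset[OF bounded_cball])
  have "D \<subseteq> cball 0 (area_radius x)"
    using area_radius_mono[OF ax] by (auto simp: D_def)
  then have "measure lborel A = measure lborel (cball (0::real^2) (area_radius x)) - measure lborel D"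
    unfolding A_def using D emeasure_bounded_finite[OF bounded_cball[of "0::real^2" "area_radius x"]]
    by (intro measure_Diff) (auto simp: borel_closed)
  then have "lam * measure lborel A = x - a"
    using mean_count_area_radius a ax by (simp add: D_def right_diff_distrib)
  moreover have "lam * measure lborel D = a"
    using mean_count_area_radius a by (simp add: D_def)
  moreover have "{\<omega> \<in> space M. ball_count (Phi \<omega>) (area_radius a) = 0 \<and> ball_count (Phi \<omega>) (area_radius x) < n}
      = {\<omega> \<in> space M. card (Phi \<omega> \<inter> D) \<in> {0} \<and> card (Phi \<omega> \<inter> A) \<in> {..<n}}"
  proof -
    have "Phi \<omega> \<inter> A = Phi \<omega> \<inter> cball 0 (area_radius x)" if "Phi \<omega> \<inter> D = {}" for \<omega>
      using that by (auto simp: A_def)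
    moreover have "card (Phi \<omega> \<inter> D) = 0 \<longleftrightarrow> Phi \<omega> \<inter> D = {}" if "\<omega> \<in> space M" for \<omega>
      using locally_finite_points_finite_cball[OF locally_finite_Phi[OF that]] by (simp add: D_def)
    ultimately show ?thesis by (auto simp: ball_count_def D_def)
  qed
  ultimately show ?thesis
    using prob_counts_disjoint[OF D A, of "{0}" "{..<n}"] prob_count_eq[OF D, of 0] prob_count_less[OF A, of n]
    by (simp add: A_def)
qed

lemma at_least_points_event: "{\<omega> \<in> space M. at_least_points k (Phi \<omega>)} \<in> events"
proof -
  have "{\<omega> \<in> space M. at_least_points k (Phi \<omega>)} = (\<Union>n. {\<omega> \<in> space M. k \<le> ball_count (Phi \<omega>) (real n)})"
    using at_least_points_iff_nat[OF locally_finite_Phi] by auto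
  also have "\<dots> \<in> events"
    using ball_count_event[where Q = "\<lambda>m. k \<le> m"] by (intro sets.countable_UN) auto
  finally show ?thesis .
qed

lemma AE_at_least_points: "AE \<omega> in M. at_least_points k (Phi \<omega>)"
proof -
  define N where "N = {\<omega> \<in> space M. \<not> at_least_points k (Phi \<omega>)}"
  have N: "N \<in> events"
    using at_least_points_event unfolding N_def by (auto intro: sets.sets_Collect_neg)
  have "prob N \<le> poisson_lt k (real n)" for n
  proof -
    have "N \<subseteq> {\<omega> \<in> space M. ball_count (Phi \<omega>) (area_radius (real n)) < k}"
      using area_radius_nonneg[of "real n"] by (auto simp: N_def at_least_points_def not_le dest: leD)
    then have "prob N \<le> prob {\<omega> \<in> space M. ball_count (Phi \<omega>) (area_radius (real n)) < k}"
      by (intro finite_measure_mono ball_count_event)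
    then show ?thesis using prob_ball_count_less[of "real n" k] by simp
  qed
  moreover have "(\<lambda>n. poisson_lt k (real n)) \<longlonglongrightarrow> 0"
    by (rule filterlim_compose[OF poisson_lt_tendsto_0 filterlim_real_sequentially])
  ultimately have "prob N \<le> 0" by (intro LIMSEQ_le_const) auto
  then have "AE \<omega> in M. \<omega> \<notin> N"
    using AE_not_in_prob_eq_0[OF N] measure_nonneg[of M N] by simp
  with AE_space show ?thesis
    by eventually_elim (simp add: N_def)
qed

lemma at_least_points_area_radius:
  assumes "at_least_points k P" "locally_finite_points P"
  obtains n :: nat where "k \<le> ball_count P (area_radius (real n))"
proof -
  obtain r where r: "r \<ge> 0" "k \<le> ball_count P r"
    using assms(1) by (auto simp: at_least_points_def)
  obtain n :: nat where "lam * pi * r\<^sup>2 \<le> real n" using real_arch_simple by blast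
  then have "r \<le> area_radius (real n)"
    using lam_pos r(1) by (simp add: area_radius_def real_le_rsqrt field_simps)
  then show ?thesis
    using that ball_count_mono[OF assms(2)] r(2) by (meson le_trans)
qed

lemma Rk_le_iff_any:
  assumes "\<omega> \<in> space M"
  shows "Rk (Phi \<omega>) k \<le> c \<longleftrightarrow>
    at_least_points k (Phi \<omega>) \<and> 0 \<le> c \<and> k \<le> ball_count (Phi \<omega>) c \<or>
    \<not> at_least_points k (Phi \<omega>) \<and> Inf {} \<le> c"
proof (cases "at_least_points k (Phi \<omega>)")
  case True
  then show ?thesis
    using Rk_le_iff[OF locally_finite_Phi[OF assms] True] Rk_nonneg[OF True] by (meson order.trans)
qed (simp add: Rk_no_points)

lemma Rk_measurable [measurable]: "(\<lambda>\<omega>. Rk (Phi \<omega>) k) \<in> borel_measurable M"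
  unfolding borel_measurable_iff_le
proof
  fix c :: real
  have "{\<omega> \<in> space M. Rk (Phi \<omega>) k \<le> c} = {\<omega> \<in> space M.
      at_least_points k (Phi \<omega>) \<and> 0 \<le> c \<and> k \<le> ball_count (Phi \<omega>) c \<or>
      \<not> at_least_points k (Phi \<omega>) \<and> Inf {} \<le> c}"
    using Rk_le_iff_any by blast
  also have "\<dots> \<in> events"
    by (intro sets.sets_Collect_disj sets.sets_Collect_conj sets.sets_Collect_neg
        at_least_points_event ball_count_event sets.sets_Collect_const)
  finally show "{\<omega> \<in> space M. Rk (Phi \<omega>) k \<le> c} \<in> events" .
qed

section \<open>Distribution of the ratio of squared nearest distances\<close>

definition ratio_event :: "nat \<Rightarrow> real \<Rightarrow> 'a set" where
  "ratio_event L s = {\<omega> \<in> space M. s * (Rk (Phi \<omega>) L)\<^sup>2 \<le> (Rk (Phi \<omega>) 1)\<^sup>2}"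

definition ratio_prob_upto :: "nat \<Rightarrow> real \<Rightarrow> real \<Rightarrow> real" where
  "ratio_prob_upto L s u =
     prob (ratio_event L s \<inter> {\<omega> \<in> space M. L \<le> ball_count (Phi \<omega>) (area_radius u)})"

definition nth_point_in :: "nat \<Rightarrow> real \<Rightarrow> real \<Rightarrow> 'a set" where
  "nth_point_in L v w = {\<omega> \<in> space M.
     ball_count (Phi \<omega>) (area_radius v) < L \<and> L \<le> ball_count (Phi \<omega>) (area_radius w)}"

lemma ratio_event_measurable [measurable]: "ratio_event L s \<in> events"
  unfolding ratio_event_def by measurable

lemma nth_point_in_measurable: "nth_point_in L v w \<in> events"
  unfolding nth_point_in_def
  by (intro sets.sets_Collect_conj[OF ball_count_event ball_count_event])

lemma prob_void_nth_point_in: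
  assumes "0 \<le> a" "a \<le> v" "v \<le> w"
  shows "prob ({\<omega> \<in> space M. ball_count (Phi \<omega>) (area_radius a) = 0} \<inter> nth_point_in L v w)
    = exp (- a) * (poisson_lt L (v - a) - poisson_lt L (w - a))"
proof -
  let ?G = "\<lambda>x. {\<omega> \<in> space M. ball_count (Phi \<omega>) (area_radius a) = 0
    \<and> ball_count (Phi \<omega>) (area_radius x) < L}"
  have mono: "ball_count (Phi \<omega>) (area_radius v) \<le> ball_count (Phi \<omega>) (area_radius w)"
    if "\<omega> \<in> space M" for \<omega>
    using ball_count_mono[OF locally_finite_Phi[OF that] area_radius_mono[OF assms(3)]] .
  then have "{\<omega> \<in> space M. ball_count (Phi \<omega>) (area_radius a) = 0} \<inter> nth_point_in L v w
      = ?G v - ?G w" and "?G w \<subseteq> ?G v"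
    by (auto simp: nth_point_in_def not_less intro: le_less_trans)
  moreover have "?G x \<in> events" for x
    by (intro sets.sets_Collect_conj[OF ball_count_event ball_count_event])
  ultimately show ?thesis
    using prob_void_ball_event[of a v L] prob_void_ball_event[of a w L] assms
    by (simp add: finite_measure_Diff right_diff_distrib)
qed

context
  fixes L :: nat and s :: real
  assumes L: "L \<ge> 2" and s: "0 < s" "s < 1"
begin

lemma ratio_prob_upto_diff:
  assumes "0 \<le> v" "v \<le> w"
  shows "ratio_prob_upto L s w - ratio_prob_upto L s v = prob (ratio_event L s \<inter> nth_point_in L v w)"
proof -
  let ?A = "\<lambda>x. ratio_event L s \<inter> {\<omega> \<in> space M. L \<le> ball_count (Phi \<omega>) (area_radius x)}"
  have "?A v \<subseteq> ?A w"
    using ball_count_mono[OF locally_finite_Phi] area_radius_mono[OF assms(2)]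
    by (auto intro: le_trans)
  moreover have "?A x \<in> events" for x
    using ratio_event_measurable ball_count_event by (rule sets.Int)
  ultimately have "prob (?A w - ?A v) = prob (?A w) - prob (?A v)"
    by (intro finite_measure_Diff)
  moreover have "?A w - ?A v = ratio_event L s \<inter> nth_point_in L v w"
    by (auto simp: nth_point_in_def)
  ultimately show ?thesis
    unfolding ratio_prob_upto_def by simp
qed

text \<open>If the L-th point lies between the discs of mean counts v and w, the ratio event forces
  the disc of mean count s v to be void, and is forced by the disc of mean count s w being void.\<close>
lemma ratio_event_nth_point_in_subset:
  assumes "0 \<le> v" "v \<le> w"
  shows "ratio_event L s \<inter> nth_point_in L v w
    \<subseteq> {\<omega> \<in> space M. ball_count (Phi \<omega>) (area_radius (s * v)) = 0} \<inter> nth_point_in L v w"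
proof safe
  fix \<omega> assume \<omega>: "\<omega> \<in> ratio_event L s" "\<omega> \<in> nth_point_in L v w"
  then have sp: "\<omega> \<in> space M" and lf: "locally_finite_points (Phi \<omega>)"
    by (auto simp: ratio_event_def locally_finite_Phi)
  have atL: "at_least_points L (Phi \<omega>)"
    using \<omega>(2) area_radius_nonneg[of w] assms by (auto simp: nth_point_in_def at_least_points_def)
  then have at1: "at_least_points 1 (Phi \<omega>)" using L by (simp add: at_least_points_mono)
  have "\<not> Rk (Phi \<omega>) L \<le> area_radius v"
    using Rk_le_iff[OF lf atL area_radius_nonneg[OF assms(1)]] \<omega>(2) by (simp add: nth_point_in_def)
  then have "s * (area_radius v)\<^sup>2 < s * (Rk (Phi \<omega>) L)\<^sup>2"
    using s area_radius_nonneg[OF assms(1)] by (intro mult_strict_left_mono power_strict_mono) auto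
  also have "\<dots> \<le> (Rk (Phi \<omega>) 1)\<^sup>2" using \<omega>(1) by (simp add: ratio_event_def)
  finally have "(area_radius (s * v))\<^sup>2 < (Rk (Phi \<omega>) 1)\<^sup>2"
    using s assms by (simp add: area_radius_sq)
  then have "area_radius (s * v) < Rk (Phi \<omega>) 1"
    using Rk_nonneg[OF at1] by (simp add: power_less_imp_less_base abs_le_square_iff)
  then show "ball_count (Phi \<omega>) (area_radius (s * v)) = 0"
    using Rk_le_iff[OF lf at1 area_radius_nonneg[of "s * v"]] s assms by (simp add: not_le)
qed (simp add: ratio_event_def)

lemma void_nth_point_in_subset_ratio_event:
  assumes "0 \<le> v" "v \<le> w"
  shows "{\<omega> \<in> space M. ball_count (Phi \<omega>) (area_radius (s * w)) = 0} \<inter> nth_point_in L v w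
    \<subseteq> ratio_event L s \<inter> nth_point_in L v w"
proof safe
  fix \<omega> assume sp: "\<omega> \<in> space M" and void: "ball_count (Phi \<omega>) (area_radius (s * w)) = 0"
    and \<omega>: "\<omega> \<in> nth_point_in L v w"
  have lf: "locally_finite_points (Phi \<omega>)" using sp by (rule locally_finite_Phi)
  have atL: "at_least_points L (Phi \<omega>)"
    using \<omega> area_radius_nonneg[of w] assms by (auto simp: nth_point_in_def at_least_points_def)
  then have at1: "at_least_points 1 (Phi \<omega>)" using L by (simp add: at_least_points_mono)
  have sw: "0 \<le> s * w" using s assms by simp
  have "Rk (Phi \<omega>) L \<le> area_radius w"
    using Rk_le_iff[OF lf atL area_radius_nonneg] \<omega> assms by (simp add: nth_point_in_def)
  then have "s * (Rk (Phi \<omega>) L)\<^sup>2 \<le> s * (area_radius w)\<^sup>2"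
    using s Rk_nonneg[OF atL] by (intro mult_left_mono power_mono) auto
  also have "\<dots> = (area_radius (s * w))\<^sup>2" using assms sw by (simp add: area_radius_sq)
  also have "\<dots> \<le> (Rk (Phi \<omega>) 1)\<^sup>2"
    using Rk_le_iff[OF lf at1 area_radius_nonneg[OF sw]] void area_radius_nonneg[OF sw]
    by (intro power_mono) auto
  finally show "\<omega> \<in> ratio_event L s" using sp by (simp add: ratio_event_def)
qed

lemma ratio_prob_upto_diff_le:
  assumes "0 \<le> v" "v \<le> w"
  shows "ratio_prob_upto L s w - ratio_prob_upto L s v
    \<le> exp (- (s * v)) * (poisson_lt L (v - s * v) - poisson_lt L (w - s * v))"
proof -
  have "ratio_prob_upto L s w - ratio_prob_upto L s v
      \<le> prob ({\<omega> \<in> space M. ball_count (Phi \<omega>) (area_radius (s * v)) = 0} \<inter> nth_point_in L v w)"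
    unfolding ratio_prob_upto_diff[OF assms] using ratio_event_nth_point_in_subset[OF assms]
    by (intro finite_measure_mono sets.Int ball_count_event nth_point_in_measurable)
  also have "\<dots> = exp (- (s * v)) * (poisson_lt L (v - s * v) - poisson_lt L (w - s * v))"
    using assms s by (intro prob_void_nth_point_in) (auto simp: mult_left_le_one_le)
  finally show ?thesis .
qed

lemma ratio_prob_upto_diff_ge:
  assumes "0 \<le> v" "v \<le> w" "s * w \<le> v"
  shows "exp (- (s * w)) * (poisson_lt L (v - s * w) - poisson_lt L (w - s * w))
    \<le> ratio_prob_upto L s w - ratio_prob_upto L s v"
proof -
  have "exp (- (s * w)) * (poisson_lt L (v - s * w) - poisson_lt L (w - s * w))
      = prob ({\<omega> \<in> space M. ball_count (Phi \<omega>) (area_radius (s * w)) = 0} \<inter> nth_point_in L v w)"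
    using assms s by (intro prob_void_nth_point_in [symmetric]) auto
  also have "\<dots> \<le> ratio_prob_upto L s w - ratio_prob_upto L s v"
    unfolding ratio_prob_upto_diff[OF assms(1,2)] using void_nth_point_in_subset_ratio_event[OF assms(1,2)]
    by (intro finite_measure_mono sets.Int ratio_event_measurable nth_point_in_measurable)
  finally show ?thesis .
qed

lemma ratio_prob_upto_0: "ratio_prob_upto L s 0 = 0"
proof -
  have "ball_count P (area_radius 0) \<le> card {0::real^2}" for P
    unfolding ball_count_def by (intro card_mono) (auto simp: area_radius_def)
  then have "{\<omega> \<in> space M. L \<le> ball_count (Phi \<omega>) (area_radius 0)} = {}"
    using L by (auto simp: not_le intro: le_less_trans[where y = 1])
  then show ?thesis unfolding ratio_prob_upto_def by (metis Int_empty_right measure_empty)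
qed

text \<open>The increments of the ratio probability are squeezed between the two bounds above,
  whose difference quotients both tend to the shifted Erlang density.\<close>
lemma ratio_prob_upto_increments_tendsto:
  assumes u: "u \<ge> 0"
  shows "((\<lambda>(v, w). (ratio_prob_upto L s w - ratio_prob_upto L s v) / (w - v))
    \<longlongrightarrow> exp (- (s * u)) * erlang_density L (u - s * u))
    (at (u, u) within {(v, w). v \<in> {0..} \<and> w \<in> {0..} \<and> v < w})"
proof -
  let ?D = "exp (- (s * u)) * erlang_density L (u - s * u)"
  let ?F = "at (u, u) within {(v, w). v \<in> {0..} \<and> w \<in> {0..} \<and> v < w}"
  let ?q = "\<lambda>p. (ratio_prob_upto L s (snd p) - ratio_prob_upto L s (fst p)) / (snd p - fst p)"
  have v: "(fst \<longlongrightarrow> u) ?F" and w: "(snd \<longlongrightarrow> u) ?F"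
    using tendsto_fst[OF tendsto_ident_at, of "(u, u)"] tendsto_snd[OF tendsto_ident_at, of "(u, u)"]
    by simp_all
  have ev: "\<forall>\<^sub>F p in ?F. 0 \<le> fst p \<and> fst p < snd p"
    by (auto simp: eventually_at_filter split: prod.splits)
  have L1: "L \<ge> 1" using L by simp
  define hi where "hi p = exp (- (s * fst p)) * ((poisson_lt L (fst p - s * fst p)
    - poisson_lt L (snd p - s * fst p)) / ((snd p - s * fst p) - (fst p - s * fst p)))" for p
  have hi_lim: "(hi \<longlongrightarrow> ?D) ?F"
    unfolding hi_def using v w ev
    by (intro exp_poisson_lt_quotient_tendsto L1) (auto intro!: tendsto_eq_intros elim: eventually_mono)
  have hi_ge: "\<forall>\<^sub>F p in ?F. ?q p \<le> hi p"
    using ev by eventually_elim (use ratio_prob_upto_diff_le in \<open>simp add: hi_def divide_right_mono\<close>)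
  obtain lo where lo_lim: "(lo \<longlongrightarrow> ?D) ?F" and lo_le: "\<forall>\<^sub>F p in ?F. lo p \<le> ?q p"
  proof (cases "u = 0")
    case True
    have "\<forall>\<^sub>F p in ?F. 0 \<le> ?q p"
      using ev by eventually_elim (use ratio_prob_upto_diff in simp)
    then show ?thesis using that[of "\<lambda>_. 0"] True L by (simp add: erlang_density_0)
  next
    case False
    define lo where "lo p = exp (- (s * snd p)) * ((poisson_lt L (fst p - s * snd p)
      - poisson_lt L (snd p - s * snd p)) / ((snd p - s * snd p) - (fst p - s * snd p)))" for p
    have "((\<lambda>p. fst p - s * snd p) \<longlongrightarrow> u - s * u) ?F" using v w by (intro tendsto_intros)
    moreover have "u - s * u > 0" using False u s by simp
    ultimately have "\<forall>\<^sub>F p in ?F. s * snd p < fst p"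
      by (auto dest: order_tendstoD(1)[where a = 0] elim: eventually_mono)
    with ev have "\<forall>\<^sub>F p in ?F. lo p \<le> ?q p"
      by eventually_elim (use ratio_prob_upto_diff_ge in \<open>simp add: lo_def divide_right_mono\<close>)
    moreover have "(lo \<longlongrightarrow> ?D) ?F"
      unfolding lo_def using v w ev
      by (intro exp_poisson_lt_quotient_tendsto L1) (auto intro!: tendsto_eq_intros elim: eventually_mono)
    ultimately show ?thesis using that by blast
  qed
  from tendsto_sandwich[OF lo_le hi_ge lo_lim hi_lim] show ?thesis
    by (simp add: case_prod_beta')
qed

lemma ratio_prob_upto_has_derivative:
  "u \<ge> 0 \<Longrightarrow> (ratio_prob_upto L s has_real_derivative (1 - s) ^ (L - 1) * erlang_density L u)
    (at u within {0..})"
  using has_field_derivative_within_increments[OF _ ratio_prob_upto_increments_tendsto]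
  by (simp add: erlang_density_shift)

lemma ratio_prob_upto_eq:
  assumes u: "u \<ge> 0"
  shows "ratio_prob_upto L s u = (1 - s) ^ (L - 1) * (1 - poisson_lt L u)"
proof -
  define K where "K u = (1 - s) ^ (L - 1) * (1 - poisson_lt L u)" for u
  have "(K has_real_derivative (1 - s) ^ (L - 1) * erlang_density L x) (at x within {0..})" for x
    unfolding K_def using L
    by (auto intro!: derivative_eq_intros has_real_derivative_poisson_lt [THEN DERIV_chain2])
  then obtain c where c: "\<And>x. x \<in> {0..} \<Longrightarrow> ratio_prob_upto L s x - K x = c"
    using has_field_derivative_zero_constant[of "{0..}" "\<lambda>x. ratio_prob_upto L s x - K x"]
      DERIV_diff[OF ratio_prob_upto_has_derivative] by fastforce
  have "c = 0"
    using c[of 0] L by (simp add: K_def ratio_prob_upto_0 poisson_lt_0)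
  then show ?thesis using c[of u] u by (simp add: K_def)
qed

lemma prob_ratio_event_less_1: "prob (ratio_event L s) = (1 - s) ^ (L - 1)"
proof -
  define A where "A n = ratio_event L s \<inter> {\<omega> \<in> space M. L \<le> ball_count (Phi \<omega>) (area_radius (real n))}"
    for n :: nat
  have A: "range A \<subseteq> events"
    using ratio_event_measurable ball_count_event by (auto simp: A_def)
  have "incseq A"
    using ball_count_mono[OF locally_finite_Phi] area_radius_mono
    by (auto simp: incseq_def A_def intro: le_trans)
  then have "(\<lambda>n. prob (A n)) \<longlonglongrightarrow> prob (\<Union>n. A n)"
    using A by (rule finite_Lim_measure_incseq[rotated])
  moreover have "(\<lambda>n. prob (A n)) \<longlonglongrightarrow> (1 - s) ^ (L - 1) * (1 - 0)"
    unfolding A_def ratio_prob_upto_def [symmetric] ratio_prob_upto_eq[OF of_nat_0_le_iff]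
    by (intro tendsto_intros filterlim_compose[OF poisson_lt_tendsto_0 filterlim_real_sequentially])
  moreover have "prob (ratio_event L s) = prob (\<Union>n. A n)"
  proof (rule measure_eq_AE)
    show "AE \<omega> in M. \<omega> \<in> ratio_event L s \<longleftrightarrow> \<omega> \<in> (\<Union>n. A n)"
      using AE_at_least_points[of L]
    proof eventually_elim
      case (elim \<omega>)
      then show ?case
        using at_least_points_area_radius[OF elim locally_finite_Phi]
        by (auto simp: A_def ratio_event_def)
    qed
  qed (use A in auto)
  ultimately show ?thesis by (simp add: LIMSEQ_unique)
qed

end

lemma prob_Rk_1_eq_Rk:
  assumes L: "L \<ge> 2"
  shows "prob {\<omega> \<in> space M. Rk (Phi \<omega>) 1 = Rk (Phi \<omega>) L} = 0"
proof -
  let ?E = "{\<omega> \<in> space M. Rk (Phi \<omega>) 1 = Rk (Phi \<omega>) L}"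
  have small: "prob ?E \<le> e" if e: "0 < e" "e < 1" for e
  proof -
    have "?E \<subseteq> ratio_event L (1 - e)"
    proof
      fix \<omega> assume "\<omega> \<in> ?E"
      moreover have "(1 - e) * (Rk (Phi \<omega>) L)\<^sup>2 \<le> (Rk (Phi \<omega>) L)\<^sup>2"
        using e by (intro mult_left_le_one_le) auto
      ultimately show "\<omega> \<in> ratio_event L (1 - e)" by (simp add: ratio_event_def)
    qed
    then have "prob ?E \<le> prob (ratio_event L (1 - e))"
      by (intro finite_measure_mono ratio_event_measurable)
    also have "\<dots> = e ^ (L - 1)"
      using prob_ratio_event_less_1[OF L, of "1 - e"] e by simp
    also have "\<dots> \<le> e ^ 1"
      using e L by (intro power_decreasing) auto
    finally show ?thesis by simp
  qed
  have "prob ?E \<le> 0 + e" if "e > 0" for e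
  proof (cases "e < 1")
    case False
    then show ?thesis using prob_le_1[of ?E] by linarith
  qed (use that small in simp)
  then have "prob ?E \<le> 0" by (rule field_le_epsilon)
  then show ?thesis using measure_nonneg[of M ?E] by linarith
qed

lemma prob_ratio_event:
  assumes L: "L \<ge> 2" and s: "0 < s"
  shows "prob (ratio_event L s) = (if s < 1 then (1 - s) ^ (L - 1) else 0)"
proof (cases "s < 1")
  case False
  have "AE \<omega> in M. \<omega> \<in> ratio_event L s \<longrightarrow> \<omega> \<in> {\<omega> \<in> space M. Rk (Phi \<omega>) 1 = Rk (Phi \<omega>) L}"
    using AE_space AE_at_least_points[of L]
  proof eventually_elim
    case (elim \<omega>)
    have lf: "locally_finite_points (Phi \<omega>)" using elim(1) by (rule locally_finite_Phi)
    have at1: "at_least_points 1 (Phi \<omega>)" using elim(2) L by (simp add: at_least_points_mono)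
    have "Rk (Phi \<omega>) 1 \<le> Rk (Phi \<omega>) L" using Rk_mono[OF lf elim(2)] L by simp
    moreover have "Rk (Phi \<omega>) L \<le> Rk (Phi \<omega>) 1" if "\<omega> \<in> ratio_event L s"
    proof (rule power2_le_imp_le)
      have "(Rk (Phi \<omega>) L)\<^sup>2 \<le> s * (Rk (Phi \<omega>) L)\<^sup>2" using False by (simp add: mult_le_cancel_right1)
      also have "\<dots> \<le> (Rk (Phi \<omega>) 1)\<^sup>2" using that by (simp add: ratio_event_def)
      finally show "(Rk (Phi \<omega>) L)\<^sup>2 \<le> (Rk (Phi \<omega>) 1)\<^sup>2" .
    qed (rule Rk_nonneg[OF at1])
    ultimately show ?case using elim(1) by auto
  qed
  then have "prob (ratio_event L s) \<le> prob {\<omega> \<in> space M. Rk (Phi \<omega>) 1 = Rk (Phi \<omega>) L}"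
    by (rule finite_measure_mono_AE) measurable
  then have "prob (ratio_event L s) = 0"
    using prob_Rk_1_eq_Rk[OF L] measure_nonneg[of M "ratio_event L s"] by linarith
  with False show ?thesis by simp
qed (simp add: prob_ratio_event_less_1 assms)

lemma AE_Rk_1_less_Rk:
  assumes L: "L \<ge> 2"
  shows "AE \<omega> in M. at_least_points L (Phi \<omega>) \<and> 0 < Rk (Phi \<omega>) 1 \<and> Rk (Phi \<omega>) 1 < Rk (Phi \<omega>) L"
proof -
  have "prob {\<omega> \<in> space M. card (Phi \<omega> \<inter> cball 0 0) = 0} = 1"
    using prob_count_eq[of "cball 0 0" 0] by (simp add: borel_closed)
  then have "AE \<omega> in M. ball_count (Phi \<omega>) 0 = 0"
    by (auto simp: ball_count_def dest: AE_prob_1)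
  moreover have "AE \<omega> in M. \<omega> \<notin> {\<omega> \<in> space M. Rk (Phi \<omega>) 1 = Rk (Phi \<omega>) L}"
    using prob_Rk_1_eq_Rk[OF L] by (intro AE_not_in_prob_eq_0) measurable
  ultimately show ?thesis
    using AE_space AE_at_least_points[of L]
  proof eventually_elim
    case (elim \<omega>)
    have lf: "locally_finite_points (Phi \<omega>)" using elim(3) by (rule locally_finite_Phi)
    have at1: "at_least_points 1 (Phi \<omega>)" using elim(4) L by (simp add: at_least_points_mono)
    have "\<not> Rk (Phi \<omega>) 1 \<le> 0" using Rk_le_iff[OF lf at1, of 0] elim(1) by simp
    moreover have "Rk (Phi \<omega>) 1 \<le> Rk (Phi \<omega>) L" using Rk_mono[OF lf elim(4)] L by simp
    ultimately show ?case using elim by auto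
  qed
qed

end

section \<open>The approximate SIR under full cooperation\<close>

definition sir_of_ratio :: "nat \<Rightarrow> real \<Rightarrow> real" where
  "sir_of_ratio L t = t\<^sup>2 / (1 + (real L - 2) * t)"

definition sir_threshold :: "nat \<Rightarrow> real \<Rightarrow> real" where
  "sir_threshold L b = 1 / (sqrt (1 / b + ((real L - 2) / 2)\<^sup>2) - (real L - 2) / 2)"

text \<open>For x = y the formula divides 0 by 0 (which is 0 in HOL), hence the strict x < y;
  R_1 < R_L holds almost surely.\<close>
lemma approx_SIR_4_value:
  fixes x y :: real
  assumes x: "0 < x" and xy: "x < y" and L: "L \<ge> 2"
  shows "y powr - 4 / (x powr - 4 + 2 * (real (L - 1) - 1) / (2 - 4)
      * (y powr (2 - 4) - x powr (2 - 4)) / (y\<^sup>2 - x\<^sup>2)) = sir_of_ratio L ((x / y)\<^sup>2)"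
proof -
  have y: "0 < y" using x xy by simp
  have "x\<^sup>2 < y\<^sup>2" using x xy by (intro power_strict_mono) auto
  then have d: "y\<^sup>2 - x\<^sup>2 \<noteq> 0" by simp
  have "y powr (2 - 4) - x powr (2 - 4) = - (y\<^sup>2 - x\<^sup>2) / (x\<^sup>2 * y\<^sup>2)"
    using x y by (simp add: powr_minus powr_realpow field_simps)
  then have q: "(y powr (2 - 4) - x powr (2 - 4)) / (y\<^sup>2 - x\<^sup>2) = - 1 / (x\<^sup>2 * y\<^sup>2)"
    using d by (metis (no_types, opaque_lifting) divide_divide_eq_left divide_minus_left divide_self mult.commute)
  have "2 * (real (L - 1) - 1) / (2 - 4) * (y powr (2 - 4) - x powr (2 - 4)) / (y\<^sup>2 - x\<^sup>2)
      = (real L - 2) / (x\<^sup>2 * y\<^sup>2)"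
    unfolding times_divide_eq_right [symmetric] q using L x y by (simp add: of_nat_diff field_simps)
  moreover have "x powr - 4 = 1 / x ^ 4" "y powr - 4 = 1 / y ^ 4"
    using x y by (simp_all add: powr_minus powr_realpow divide_inverse)
  ultimately have "y powr - 4 / (x powr - 4 + 2 * (real (L - 1) - 1) / (2 - 4)
      * (y powr (2 - 4) - x powr (2 - 4)) / (y\<^sup>2 - x\<^sup>2))
      = (1 / y ^ 4) / (1 / x ^ 4 + (real L - 2) / (x\<^sup>2 * y\<^sup>2))"
    by (simp only:)
  also have "\<dots> = sir_of_ratio L ((x / y)\<^sup>2)"
    using x y L by (simp add: sir_of_ratio_def field_simps eval_nat_numeral)
  finally show ?thesis .
qed

lemma quadratic_threshold_iff:
  fixes b m t :: real
  assumes b: "b > 0" and m: "m \<ge> 0" and t: "t > 0"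
  shows "b * (1 + 2 * m * t) \<le> t\<^sup>2 \<longleftrightarrow> 1 / (sqrt (1 / b + m\<^sup>2) - m) \<le> t"
proof -
  define r where "r = sqrt (1 / b + m\<^sup>2)"
  have r2: "r\<^sup>2 = 1 / b + m\<^sup>2" using b by (simp add: r_def)
  have "m < r" unfolding r_def using b by (intro real_less_rsqrt) simp
  have root: "1 / (r - m) = b * (r + m)"
    using \<open>m < r\<close> b r2 by (simp add: field_simps power2_eq_square)
  have "t\<^sup>2 - b * (1 + 2 * m * t) = (t - b * (r + m)) * (t + b * (r - m))"
    using r2 b by (simp add: field_simps power2_eq_square)
  moreover have "t + b * (r - m) > 0" using t b \<open>m < r\<close> by (simp add: add_pos_pos)
  ultimately have "b * (1 + 2 * m * t) \<le> t\<^sup>2 \<longleftrightarrow> b * (r + m) \<le> t"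
    by (smt (verit) zero_le_mult_iff)
  then show ?thesis by (simp add: r_def [symmetric] root)
qed

lemma sir_of_ratio_ge_iff:
  assumes b: "b > 0" and t: "t > 0" and L: "L \<ge> 2"
  shows "b \<le> sir_of_ratio L t \<longleftrightarrow> sir_threshold L b \<le> t"
proof -
  have "1 + (real L - 2) * t > 0" using t L by (simp add: add_pos_nonneg)
  moreover have "2 * ((real L - 2) / 2) = real L - 2" by simp
  ultimately have "b \<le> sir_of_ratio L t \<longleftrightarrow> b * (1 + 2 * ((real L - 2) / 2) * t) \<le> t\<^sup>2"
    by (simp only: sir_of_ratio_def pos_le_divide_eq)
  also have "\<dots> \<longleftrightarrow> sir_threshold L b \<le> t"
    unfolding sir_threshold_def using b t L by (intro quadratic_threshold_iff) auto
  finally show ?thesis .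
qed

lemma sir_threshold_less_1_iff:
  assumes b: "b > 0" and L: "L \<ge> 2"
  shows "sir_threshold L b < 1 \<longleftrightarrow> b * (real L - 1) < 1"
proof -
  define m where "m = (real L - 2) / 2"
  define r where "r = sqrt (1 / b + m\<^sup>2)"
  have m: "m \<ge> 0" using L by (simp add: m_def)
  have "m < r" unfolding r_def using b by (intro real_less_rsqrt) simp
  then have "sir_threshold L b < 1 \<longleftrightarrow> 1 + m < r"
    by (simp add: sir_threshold_def m_def [symmetric] r_def [symmetric]) linarith
  also have "\<dots> \<longleftrightarrow> (1 + m)\<^sup>2 < 1 / b + m\<^sup>2"
    using m unfolding r_def by (metis real_sqrt_abs real_sqrt_less_iff abs_of_nonneg add_nonneg_nonneg zero_le_one)
  also have "\<dots> \<longleftrightarrow> b * (1 + 2 * m) < 1"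
    using b by (simp add: power2_eq_square field_simps)
  also have "1 + 2 * m = real L - 1" by (simp add: m_def field_simps)
  finally show ?thesis .
qed

lemma sir_threshold_pos:
  assumes "b > 0"
  shows "sir_threshold L b > 0"
proof -
  have "(real L - 2) / 2 < sqrt (1 / b + ((real L - 2) / 2)\<^sup>2)"
    using assms by (intro real_less_rsqrt) simp
  then show ?thesis by (simp add: sir_threshold_def)
qed

lemma approx_SIR_cong:
  "{i \<in> {1..L-1}. f i} = {i \<in> {1..L-1}. g i} \<Longrightarrow> approx_SIR alpha L P f = approx_SIR alpha L P g"
  unfolding approx_SIR_def by (simp only:)

lemma Min_Rk_eq_Rk_1:
  assumes lf: "locally_finite_points P" and atL: "at_least_points L P" and L: "L \<ge> 2"
  shows "Min (Rk P ` {1..L-1}) = Rk P 1"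
proof (rule Min_eqI)
  fix y assume "y \<in> Rk P ` {1..L-1}"
  then obtain i where "i \<in> {1..L-1}" "y = Rk P i" by auto
  then show "Rk P 1 \<le> y"
    using Rk_mono[OF lf at_least_points_mono[OF atL]] by auto
qed (use L in auto)

lemma approx_SIR_4_all_active:
  assumes L: "L \<ge> 2" and lf: "locally_finite_points P" and atL: "at_least_points L P"
    and pos: "0 < Rk P 1" and less: "Rk P 1 < Rk P L" and active: "\<forall>i\<in>{1..L-1}. a i"
  shows "approx_SIR 4 L P a = ereal (sir_of_ratio L ((Rk P 1 / Rk P L)\<^sup>2))"
proof -
  have "{i \<in> {1..L-1}. a i} = {1..L-1}" using active by auto
  then show ?thesis
    using L Min_Rk_eq_Rk_1[OF lf atL L] approx_SIR_4_value[OF pos less L]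
    by (simp add: approx_SIR_def Let_def)
qed

context planar_ppp
begin

lemma approx_SIR_pattern_event:
  "{\<omega> \<in> space M. ereal c \<le> approx_SIR alpha L (Phi \<omega>) (\<lambda>i. i \<in> A)} \<in> events"
proof (cases "card {i \<in> {1..L-1}. i \<in> A} = 0")
  case False
  define A' where "A' = {i \<in> {1..L-1}. i \<in> A}"
  have "(\<lambda>\<omega>. Min ((\<lambda>i. Rk (Phi \<omega>) i) ` A')) \<in> borel_measurable M"
    by (rule borel_measurable_Min) (simp_all add: A'_def)
  then show ?thesis
    using False unfolding approx_SIR_def A'_def [symmetric] Let_def by simp measurable
qed (simp add: approx_SIR_def)

lemma approx_SIR_event:
  assumes active: "\<forall>i\<in>{1..L-1}. {\<omega> \<in> space M. a i \<omega>} \<in> events"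
  shows "{\<omega> \<in> space M. ereal c \<le> approx_SIR alpha L (Phi \<omega>) (\<lambda>i. a i \<omega>)} \<in> events"
proof -
  have "{\<omega> \<in> space M. ereal c \<le> approx_SIR alpha L (Phi \<omega>) (\<lambda>i. a i \<omega>)}
    = (\<Union>A\<in>Pow {1..L-1}. {\<omega> \<in> space M. \<forall>i\<in>{1..L-1}. a i \<omega> = (i \<in> A)}
        \<inter> {\<omega> \<in> space M. ereal c \<le> approx_SIR alpha L (Phi \<omega>) (\<lambda>i. i \<in> A)})"
  proof (intro equalityI subsetI)
    fix \<omega> assume "\<omega> \<in> {\<omega> \<in> space M. ereal c \<le> approx_SIR alpha L (Phi \<omega>) (\<lambda>i. a i \<omega>)}"
    moreover have "approx_SIR alpha L (Phi \<omega>) (\<lambda>i. a i \<omega>)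
        = approx_SIR alpha L (Phi \<omega>) (\<lambda>i. i \<in> {i \<in> {1..L-1}. a i \<omega>})"
      by (rule approx_SIR_cong) auto
    ultimately show "\<omega> \<in> (\<Union>A\<in>Pow {1..L-1}. {\<omega> \<in> space M. \<forall>i\<in>{1..L-1}. a i \<omega> = (i \<in> A)}
        \<inter> {\<omega> \<in> space M. ereal c \<le> approx_SIR alpha L (Phi \<omega>) (\<lambda>i. i \<in> A)})"
      by (intro UN_I[of "{i \<in> {1..L-1}. a i \<omega>}"]) auto
  next
    fix \<omega> assume "\<omega> \<in> (\<Union>A\<in>Pow {1..L-1}. {\<omega> \<in> space M. \<forall>i\<in>{1..L-1}. a i \<omega> = (i \<in> A)}
        \<inter> {\<omega> \<in> space M. ereal c \<le> approx_SIR alpha L (Phi \<omega>) (\<lambda>i. i \<in> A)})"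
    then obtain A where "\<omega> \<in> space M" "\<forall>i\<in>{1..L-1}. a i \<omega> = (i \<in> A)"
      "ereal c \<le> approx_SIR alpha L (Phi \<omega>) (\<lambda>i. i \<in> A)"
      by blast
    moreover from this(2) have "approx_SIR alpha L (Phi \<omega>) (\<lambda>i. a i \<omega>)
        = approx_SIR alpha L (Phi \<omega>) (\<lambda>i. i \<in> A)"
      by (intro approx_SIR_cong) auto
    ultimately show "\<omega> \<in> {\<omega> \<in> space M. ereal c \<le> approx_SIR alpha L (Phi \<omega>) (\<lambda>i. a i \<omega>)}"
      by simp
  qed
  also have "\<dots> \<in> events"
  proof (intro sets.finite_UN sets.Int approx_SIR_pattern_event sets.sets_Collect_finite_All ballI)
    fix A i assume "i \<in> {1..L-1}"
    then show "{\<omega> \<in> space M. a i \<omega> = (i \<in> A)} \<in> events"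
      using active by (cases "i \<in> A") (auto simp: Collect_neg_eq [symmetric] intro: sets.sets_Collect_neg)
  qed auto
  finally show ?thesis .
qed

lemma AE_approx_SIR_ge_iff_ratio_event:
  assumes L: "L \<ge> 2" and b: "b > 0" and active: "AE \<omega> in M. \<forall>i\<in>{1..L-1}. a i \<omega>"
  shows "AE \<omega> in M. ereal b \<le> approx_SIR 4 L (Phi \<omega>) (\<lambda>i. a i \<omega>)
    \<longleftrightarrow> \<omega> \<in> ratio_event L (sir_threshold L b)"
  using AE_space active AE_Rk_1_less_Rk[OF L]
proof eventually_elim
  case (elim \<omega>)
  define x y where "x = Rk (Phi \<omega>) 1" and "y = Rk (Phi \<omega>) L"
  have xy: "0 < x" "x < y" using elim(3) by (simp_all add: x_def y_def)
  have "approx_SIR 4 L (Phi \<omega>) (\<lambda>i. a i \<omega>) = ereal (sir_of_ratio L ((x / y)\<^sup>2))"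
    unfolding x_def y_def using elim by (intro approx_SIR_4_all_active L locally_finite_Phi) auto
  then have "ereal b \<le> approx_SIR 4 L (Phi \<omega>) (\<lambda>i. a i \<omega>) \<longleftrightarrow> b \<le> sir_of_ratio L ((x / y)\<^sup>2)"
    by simp
  also have "\<dots> \<longleftrightarrow> sir_threshold L b \<le> (x / y)\<^sup>2"
    using xy by (intro sir_of_ratio_ge_iff b L) simp
  also have "\<dots> \<longleftrightarrow> sir_threshold L b * y\<^sup>2 \<le> x\<^sup>2"
    using xy by (simp add: power_divide pos_le_divide_eq)
  also have "\<dots> \<longleftrightarrow> \<omega> \<in> ratio_event L (sir_threshold L b)"
    using elim(1) by (simp add: ratio_event_def x_def y_def)
  finally show ?case .
qed

lemma prob_approx_SIR_ge:
  assumes L: "L \<ge> 2" and b: "b > 0"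
    and meas: "\<forall>i\<in>{1..L-1}. {\<omega> \<in> space M. a i \<omega>} \<in> events"
    and active: "AE \<omega> in M. \<forall>i\<in>{1..L-1}. a i \<omega>"
  shows "prob {\<omega> \<in> space M. ereal b \<le> approx_SIR 4 L (Phi \<omega>) (\<lambda>i. a i \<omega>)}
    = prob (ratio_event L (sir_threshold L b))"
proof (rule measure_eq_AE)
  show "AE \<omega> in M. \<omega> \<in> {\<omega> \<in> space M. ereal b \<le> approx_SIR 4 L (Phi \<omega>) (\<lambda>i. a i \<omega>)}
      \<longleftrightarrow> \<omega> \<in> ratio_event L (sir_threshold L b)"
    using AE_space AE_approx_SIR_ge_iff_ratio_event[OF L b active] by eventually_elim auto
qed (use approx_SIR_event[OF meas] in auto)
end

lemma planar_pppI: "hppp M lam Phi \<Longrightarrow> lam > 0 \<Longrightarrow> planar_ppp M lam Phi"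
  unfolding planar_ppp_def planar_ppp_axioms_def by (auto simp: hppp_def)

theorem corollary7:
  fixes M :: "'a measure" and Phi :: "'a \<Rightarrow> (real^2) set" and a :: "nat \<Rightarrow> 'a \<Rightarrow> bool"
    and lam gamma beta p :: real and L :: nat
  assumes ppp: "hppp M lam Phi" and lam: "lam > 0"
    and L: "L \<ge> 2" and gamma: "gamma > 0" and beta: "beta > 0"
    and p: "p = 1"
    and a_meas: "\<forall>i\<in>{1..L-1}. {\<omega>\<in>space M. a i \<omega>} \<in> sets M"
    and a_bern: "\<forall>i\<in>{1..L-1}. measure M {\<omega>\<in>space M. a i \<omega>} = p"
    and a_indep: "prob_space.indep_vars M (\<lambda>_. count_space UNIV) a {1..L-1}"
  shows "measure M {\<omega>\<in>space M. approx_SIR 4 L (Phi \<omega>) (\<lambda>i. a i \<omega>) \<ge> ereal (beta / gamma)}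
    = (if beta < gamma / real (L - 1)
       then (1 - 1 / (sqrt (gamma / beta + (real L - 2)\<^sup>2 / 4) - (real L - 2) / 2)) ^ (L - 1)
       else 0)"
proof -
  interpret planar_ppp M lam Phi using ppp lam by (rule planar_pppI)
  define b where "b = beta / gamma"
  have b: "b > 0" using beta gamma by (simp add: b_def)
  have "AE \<omega> in M. \<forall>i\<in>{1..L-1}. a i \<omega>" using a_bern p by (intro AE_all_prob_eq_1) auto
  from prob_approx_SIR_ge[OF L b a_meas this]
  have "measure M {\<omega> \<in> space M. approx_SIR 4 L (Phi \<omega>) (\<lambda>i. a i \<omega>) \<ge> ereal b}
      = prob (ratio_event L (sir_threshold L b))" .
  also have "\<dots> = (if sir_threshold L b < 1 then (1 - sir_threshold L b) ^ (L - 1) else 0)"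
    using prob_ratio_event[OF L sir_threshold_pos[OF b]] .
  also have "sir_threshold L b < 1 \<longleftrightarrow> beta < gamma / real (L - 1)"
    using sir_threshold_less_1_iff[OF b L] L gamma by (simp add: b_def of_nat_diff field_simps)
  finally show ?thesis
    by (simp add: b_def sir_threshold_def power_divide)
qed

end
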